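(* Let $\Sigma$ be a theory and let $A,B \subseteq \mathcal{T}_Y$ be finite. Then $B \subseteq A_\Sigma^{\omega}$ if and only if $\Sigma \vdash A \Rightarrow B$.
   Context: $Y$ is a non-empty finite set of attributes and $\mathcal{T}_Y = \{y^i \mid y \in Y, i \in \mathbb{Z}\}$; $M + j = \{y^{i+j} \mid y^i \in M\}$. A formula is $A \Rightarrow B$ with $A,B$ finite subsets of $\mathcal{T}_Y$; a theory is a set of formulas. Syntactic closure: for $M \subseteq \mathcal{T}_Y$, $M_\Sigma^0 = M$, $M_\Sigma^{n+1} = M_\Sigma^n \cup \bigcup\{F+i \mid E \Rightarrow F \in \Sigma, i \in \mathbb{Z}, E+i \subseteq M_\Sigma^n\}$, and $M_\Sigma^\omega = \bigcup_{n=0}^\infty M_\Sigma^n$. Deduction rules (for arbitrary finite $A,B,C,D \subseteq \mathcal{T}_Y$, $i \in \mathbb{Z}$): (Ax) infer $A \cup B \Rightarrow A$; (Cut) from $A \Rightarrow B$ and $B \cup C \Rightarrow D$ infer $A \cup C \Rightarrow D$; (Shf) from $A \Rightarrow B$ infer $A+i \Rightarrow B+i$. A proof of $A \Rightarrow B$ by $\Sigma$ is a finite sequence of formulas ending with $A \Rightarrow B$ in which each member is in $\Sigma$ or is the conclusion of a rule whose hypotheses occur earlier; $\Sigma \vdash A \Rightarrow B$ means such a proof exists. *)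

theory Defs
  imports Main
begin

text \<open>Attributes form a finite nonempty type 'y (class finite; HOL types are nonempty).
  Temporal attributes y^i are pairs (y, i) with i :: int.  A formula A \<Rightarrow> B is a pair (A, B).\<close>

type_synonym 'y tattr = "'y \<times> int"
type_synonym 'y fml = "'y tattr set \<times> 'y tattr set"

definition shift :: "'y tattr set \<Rightarrow> int \<Rightarrow> 'y tattr set" where
  "shift M j = (\<lambda>(y, i). (y, i + j)) ` M"

definition is_formula :: "'y fml \<Rightarrow> bool" where
  "is_formula \<phi> \<longleftrightarrow> finite (fst \<phi>) \<and> finite (snd \<phi>)"

definition is_theory :: "'y fml set \<Rightarrow> bool" where
  "is_theory \<Sigma> \<longleftrightarrow> (\<forall>\<phi>\<in>\<Sigma>. is_formula \<phi>)"

definition clo_step :: "'y fml set \<Rightarrow> 'y tattr set \<Rightarrow> 'y tattr set" where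
  "clo_step \<Sigma> M = M \<union> \<Union>{shift F i | E F i. (E, F) \<in> \<Sigma> \<and> shift E i \<subseteq> M}"

definition clo_n :: "'y fml set \<Rightarrow> 'y tattr set \<Rightarrow> nat \<Rightarrow> 'y tattr set" where
  "clo_n \<Sigma> M n = (clo_step \<Sigma> ^^ n) M"

definition clo_omega :: "'y fml set \<Rightarrow> 'y tattr set \<Rightarrow> 'y tattr set" where
  "clo_omega \<Sigma> M = (\<Union>n. clo_n \<Sigma> M n)"

definition ax_inst :: "'y fml \<Rightarrow> bool" where
  "ax_inst \<phi> \<longleftrightarrow> (\<exists>A B. finite A \<and> finite B \<and> \<phi> = (A \<union> B, A))"

definition cut_inst :: "'y fml \<Rightarrow> 'y fml \<Rightarrow> 'y fml \<Rightarrow> bool" where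
  "cut_inst h1 h2 \<phi> \<longleftrightarrow> (\<exists>A B C D. finite A \<and> finite B \<and> finite C \<and> finite D \<and>
      h1 = (A, B) \<and> h2 = (B \<union> C, D) \<and> \<phi> = (A \<union> C, D))"

definition shf_inst :: "'y fml \<Rightarrow> 'y fml \<Rightarrow> bool" where
  "shf_inst h \<phi> \<longleftrightarrow> (\<exists>A B i. finite A \<and> finite B \<and>
      h = (A, B) \<and> \<phi> = (shift A i, shift B i))"

definition is_proof :: "'y fml set \<Rightarrow> 'y fml list \<Rightarrow> bool" where
  "is_proof \<Sigma> ps \<longleftrightarrow> ps \<noteq> [] \<and>
     (\<forall>k < length ps. ps ! k \<in> \<Sigma> \<or> ax_inst (ps ! k)
        \<or> (\<exists>j < k. \<exists>l < k. cut_inst (ps ! j) (ps ! l) (ps ! k))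
        \<or> (\<exists>j < k. shf_inst (ps ! j) (ps ! k)))"

definition provable :: "'y fml set \<Rightarrow> 'y fml \<Rightarrow> bool" where
  "provable \<Sigma> \<phi> \<longleftrightarrow> (\<exists>ps. is_proof \<Sigma> ps \<and> last ps = \<phi>)"

end

theory Submission
  imports Defs
begin

text \<open>Proof sequences are equivalent to the inductive closure of \<Sigma> under Ax, Cut and Shf, so
  both directions go by induction.  Soundness: each rule preserves B \<subseteq> A^\<omega>; for Shf because
  shifting a closure stays inside the closure of the shifted set, for Cut because the closure is
  idempotent, which uses that the premises of formulas of \<Sigma> are finite.  Completeness: by induction
  on n every element of the n-th stage is derivable from A, since a new element lies in F+i for
  some E \<Rightarrow> F in \<Sigma> with E+i in the previous stage, and A \<Rightarrow> E+i, E+i \<Rightarrow> F+i (by Shf) and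
  F+i \<Rightarrow> {b} (by Ax) chain by Cut.\<close>

inductive derivable :: "'y fml set \<Rightarrow> 'y fml \<Rightarrow> bool" for \<Sigma> :: "'y fml set" where
  member: "\<phi> \<in> \<Sigma> \<Longrightarrow> derivable \<Sigma> \<phi>"
| ax: "ax_inst \<phi> \<Longrightarrow> derivable \<Sigma> \<phi>"
| cut: "derivable \<Sigma> h1 \<Longrightarrow> derivable \<Sigma> h2 \<Longrightarrow> cut_inst h1 h2 \<phi> \<Longrightarrow> derivable \<Sigma> \<phi>"
| shf: "derivable \<Sigma> h \<Longrightarrow> shf_inst h \<phi> \<Longrightarrow> derivable \<Sigma> \<phi>"

definition justified :: "'y fml set \<Rightarrow> 'y fml list \<Rightarrow> nat \<Rightarrow> bool" where
  "justified \<Sigma> ps k \<longleftrightarrow> ps ! k \<in> \<Sigma> \<or> ax_inst (ps ! k)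
     \<or> (\<exists>j < k. \<exists>l < k. cut_inst (ps ! j) (ps ! l) (ps ! k))
     \<or> (\<exists>j < k. shf_inst (ps ! j) (ps ! k))"

lemma is_proof_iff_justified:
  "is_proof \<Sigma> ps \<longleftrightarrow> ps \<noteq> [] \<and> (\<forall>k < length ps. justified \<Sigma> ps k)"
  unfolding is_proof_def justified_def ..

lemma justified_append_left:
  assumes "k < length xs" "justified \<Sigma> xs k"
  shows "justified \<Sigma> (xs @ ys) k"
proof -
  have "(xs @ ys) ! j = xs ! j" if "j \<le> k" for j
    using that assms(1) by (simp add: nth_append)
  then show ?thesis
    using assms(2) unfolding justified_def by (metis less_imp_le order_refl)
qed

lemma justified_append_right:
  assumes "justified \<Sigma> ys k"
  shows "justified \<Sigma> (xs @ ys) (length xs + k)"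
proof -
  have nth: "(xs @ ys) ! (length xs + j) = ys ! j" for j
    by (simp add: nth_append)
  from assms show ?thesis
    unfolding justified_def nth
    by (elim disjE exE conjE) (metis nth add_less_cancel_left)+
qed

lemma is_proof_append:
  assumes "is_proof \<Sigma> xs" "is_proof \<Sigma> ys"
  shows "is_proof \<Sigma> (xs @ ys)"
  unfolding is_proof_iff_justified
proof (intro conjI allI impI)
  show "xs @ ys \<noteq> []"
    using assms(1) by (simp add: is_proof_def)
  fix k assume k: "k < length (xs @ ys)"
  show "justified \<Sigma> (xs @ ys) k"
  proof (cases "k < length xs")
    case True
    then show ?thesis
      using assms(1) by (simp add: is_proof_iff_justified justified_append_left)
  next
    case False
    then obtain k' where "k = length xs + k'" "k' < length ys"
      using k by (metis add_diff_inverse_nat length_append nat_add_left_cancel_less)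
    then show ?thesis
      using assms(2) by (simp add: is_proof_iff_justified justified_append_right)
  qed
qed

lemma is_proof_snoc:
  assumes "is_proof \<Sigma> xs" and "justified \<Sigma> (xs @ [\<phi>]) (length xs)"
  shows "is_proof \<Sigma> (xs @ [\<phi>])"
  using assms justified_append_left[of _ xs \<Sigma> "[\<phi>]"]
  by (auto simp: is_proof_iff_justified less_Suc_eq)

lemma justified_snoc_cut:
  assumes "h1 \<in> set xs" "h2 \<in> set xs" "cut_inst h1 h2 \<phi>"
  shows "justified \<Sigma> (xs @ [\<phi>]) (length xs)"
proof -
  obtain j l where "j < length xs" "l < length xs" "xs ! j = h1" "xs ! l = h2"
    using assms(1,2) by (meson in_set_conv_nth)
  then show ?thesis
    using assms(3) unfolding justified_def by (auto simp: nth_append)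
qed

lemma justified_snoc_shf:
  assumes "h \<in> set xs" "shf_inst h \<phi>"
  shows "justified \<Sigma> (xs @ [\<phi>]) (length xs)"
proof -
  obtain j where "j < length xs" "xs ! j = h"
    using assms(1) by (meson in_set_conv_nth)
  then show ?thesis
    using assms(2) unfolding justified_def by (auto simp: nth_append)
qed

lemma derivable_if_is_proof:
  assumes "is_proof \<Sigma> ps" "k < length ps"
  shows "derivable \<Sigma> (ps ! k)"
  using assms(2)
proof (induction k rule: less_induct)
  case (less k)
  then have "justified \<Sigma> ps k"
    using assms(1) by (simp add: is_proof_iff_justified)
  then show ?case
    unfolding justified_def
    by (meson derivable.intros less.IH less.prems order.strict_trans)
qed

lemma provable_if_derivable:
  "derivable \<Sigma> \<phi> \<Longrightarrow> provable \<Sigma> \<phi>"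
proof (induction rule: derivable.induct)
  case (member \<phi>)
  then show ?case
    unfolding provable_def is_proof_def by (intro exI[of _ "[\<phi>]"]) simp
next
  case (ax \<phi>)
  then show ?case
    unfolding provable_def is_proof_def by (intro exI[of _ "[\<phi>]"]) simp
next
  case (cut h1 h2 \<phi>)
  then obtain xs ys where
    "is_proof \<Sigma> xs" "last xs = h1" "is_proof \<Sigma> ys" "last ys = h2"
    unfolding provable_def by blast
  moreover have "xs \<noteq> []" "ys \<noteq> []"
    using calculation by (auto simp: is_proof_def)
  ultimately have "is_proof \<Sigma> ((xs @ ys) @ [\<phi>])"
    using cut.hyps(3) by (intro is_proof_snoc is_proof_append justified_snoc_cut) auto
  then show ?case
    unfolding provable_def by (metis last_snoc)
next
  case (shf h \<phi>)
  then obtain xs where "is_proof \<Sigma> xs" "last xs = h"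
    unfolding provable_def by blast
  moreover have "xs \<noteq> []"
    using calculation by (auto simp: is_proof_def)
  ultimately have "is_proof \<Sigma> (xs @ [\<phi>])"
    using shf.hyps(2) by (intro is_proof_snoc justified_snoc_shf) auto
  then show ?case
    unfolding provable_def by (metis last_snoc)
qed

lemma provable_iff_derivable: "provable \<Sigma> \<phi> \<longleftrightarrow> derivable \<Sigma> \<phi>"
proof
  assume "provable \<Sigma> \<phi>"
  then obtain ps where "is_proof \<Sigma> ps" "last ps = \<phi>"
    unfolding provable_def by blast
  then show "derivable \<Sigma> \<phi>"
    using derivable_if_is_proof[of \<Sigma> ps "length ps - 1"]
    by (auto simp: is_proof_def last_conv_nth)
qed (rule provable_if_derivable)

lemma finite_shift [simp]: "finite (shift A i) \<longleftrightarrow> finite A"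
  unfolding shift_def by (rule finite_image_iff) (auto simp: inj_on_def)

lemma shift_0 [simp]: "shift A 0 = A"
  unfolding shift_def by auto

lemma shift_shift: "shift (shift A i) j = shift A (i + j)"
  unfolding shift_def image_image by (simp add: case_prod_beta add.assoc)

lemma shift_mono: "A \<subseteq> B \<Longrightarrow> shift A i \<subseteq> shift B i"
  unfolding shift_def by (rule image_mono)

lemma clo_n_0 [simp]: "clo_n \<Sigma> M 0 = M"
  unfolding clo_n_def by simp

lemma clo_n_Suc [simp]: "clo_n \<Sigma> M (Suc n) = clo_step \<Sigma> (clo_n \<Sigma> M n)"
  unfolding clo_n_def by simp

lemma is_theoryD: "is_theory \<Sigma> \<Longrightarrow> (E, F) \<in> \<Sigma> \<Longrightarrow> finite E \<and> finite F"
  unfolding is_theory_def is_formula_def by fastforce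

lemma clo_step_mono: "X \<subseteq> Y \<Longrightarrow> clo_step \<Sigma> X \<subseteq> clo_step \<Sigma> Y"
  unfolding clo_step_def by blast

lemma subset_clo_step: "M \<subseteq> clo_step \<Sigma> M"
  unfolding clo_step_def by (rule Un_upper1)

lemma clo_stepE:
  assumes "x \<in> clo_step \<Sigma> M"
  obtains "x \<in> M"
  | E F i where "(E, F) \<in> \<Sigma>" "shift E i \<subseteq> M" "x \<in> shift F i"
  using assms unfolding clo_step_def by blast

lemma clo_step_rule:
  assumes "(E, F) \<in> \<Sigma>" "shift E i \<subseteq> M"
  shows "shift F i \<subseteq> clo_step \<Sigma> M"
proof -
  have "shift F i \<in> {shift F' j |E' F' j. (E', F') \<in> \<Sigma> \<and> shift E' j \<subseteq> M}"
    using assms by blast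
  then show ?thesis
    unfolding clo_step_def by (intro le_supI2 Union_upper)
qed

lemma clo_n_mono: "m \<le> n \<Longrightarrow> clo_n \<Sigma> M m \<subseteq> clo_n \<Sigma> M n"
  by (rule lift_Suc_mono_le) (simp add: subset_clo_step)

lemma clo_n_subset_clo_omega: "clo_n \<Sigma> M n \<subseteq> clo_omega \<Sigma> M"
  unfolding clo_omega_def by blast

lemma subset_clo_omega: "M \<subseteq> clo_omega \<Sigma> M"
  using clo_n_subset_clo_omega[of \<Sigma> M 0] by simp

lemma clo_omega_mono: "X \<subseteq> Y \<Longrightarrow> clo_omega \<Sigma> X \<subseteq> clo_omega \<Sigma> Y"
proof -
  assume "X \<subseteq> Y"
  then have "clo_n \<Sigma> X n \<subseteq> clo_n \<Sigma> Y n" for n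
    by (induction n) (simp_all add: clo_step_mono)
  then show ?thesis
    unfolding clo_omega_def by blast
qed

lemma finite_subset_clo_n:
  assumes "finite S" "S \<subseteq> clo_omega \<Sigma> M"
  shows "\<exists>n. S \<subseteq> clo_n \<Sigma> M n"
  using assms
proof (induction S rule: finite_induct)
  case (insert x S)
  then obtain n m where "S \<subseteq> clo_n \<Sigma> M n" "x \<in> clo_n \<Sigma> M m"
    unfolding clo_omega_def by blast
  then have "insert x S \<subseteq> clo_n \<Sigma> M (max n m)"
    using clo_n_mono[of n "max n m" \<Sigma> M] clo_n_mono[of m "max n m" \<Sigma> M] by auto
  then show ?case ..
qed simp

lemma clo_omega_closed:
  assumes "(E, F) \<in> \<Sigma>" "finite E" "shift E i \<subseteq> clo_omega \<Sigma> M"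
  shows "shift F i \<subseteq> clo_omega \<Sigma> M"
proof -
  obtain n where "shift E i \<subseteq> clo_n \<Sigma> M n"
    using assms(2,3) finite_subset_clo_n by (metis finite_shift)
  then have "shift F i \<subseteq> clo_n \<Sigma> M (Suc n)"
    using clo_step_rule[OF assms(1)] by simp
  then show ?thesis
    using clo_n_subset_clo_omega by blast
qed

lemma clo_omega_subset:
  assumes "is_theory \<Sigma>" "Y \<subseteq> clo_omega \<Sigma> X"
  shows "clo_omega \<Sigma> Y \<subseteq> clo_omega \<Sigma> X"
proof -
  have "clo_n \<Sigma> Y n \<subseteq> clo_omega \<Sigma> X" for n
  proof (induction n)
    case (Suc n)
    show ?case
    proof
      fix x assume "x \<in> clo_n \<Sigma> Y (Suc n)"
      then have "x \<in> clo_step \<Sigma> (clo_n \<Sigma> Y n)"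
        by simp
      then show "x \<in> clo_omega \<Sigma> X"
      proof (cases rule: clo_stepE)
        case (2 E F i)
        then show ?thesis
          using Suc.IH clo_omega_closed[of E F \<Sigma> i X] is_theoryD[OF assms(1)] by blast
      qed (use Suc.IH in blast)
    qed
  qed (simp add: assms(2))
  then show ?thesis
    unfolding clo_omega_def by blast
qed

lemma shift_clo_step: "shift (clo_step \<Sigma> X) i \<subseteq> clo_step \<Sigma> (shift X i)"
proof
  fix x assume "x \<in> shift (clo_step \<Sigma> X) i"
  then obtain z where z: "z \<in> clo_step \<Sigma> X" and x: "x \<in> shift {z} i"
    unfolding shift_def by blast
  from z show "x \<in> clo_step \<Sigma> (shift X i)"
  proof (cases rule: clo_stepE)
    case 1
    then show ?thesis
      using x shift_mono[of "{z}" X i] subset_clo_step by blast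
  next
    case (2 E F j)
    have "shift E (j + i) \<subseteq> shift X i"
      using shift_mono[OF 2(2), of i] by (simp add: shift_shift)
    then have "shift F (j + i) \<subseteq> clo_step \<Sigma> (shift X i)"
      by (rule clo_step_rule[OF 2(1)])
    moreover have "x \<in> shift F (j + i)"
      using x 2(3) shift_mono[of "{z}" "shift F j" i] by (auto simp: shift_shift)
    ultimately show ?thesis
      by blast
  qed
qed

lemma shift_clo_n: "shift (clo_n \<Sigma> M n) i \<subseteq> clo_n \<Sigma> (shift M i) n"
proof (induction n)
  case (Suc n)
  then show ?case
    using shift_clo_step clo_step_mono by (simp, blast)
qed simp

lemma shift_clo_omega: "shift (clo_omega \<Sigma> M) i \<subseteq> clo_omega \<Sigma> (shift M i)"
  using shift_clo_n[of \<Sigma> M _ i] unfolding clo_omega_def shift_def by blast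

lemma member_subset_clo_omega: "(E, F) \<in> \<Sigma> \<Longrightarrow> F \<subseteq> clo_omega \<Sigma> E"
proof -
  assume "(E, F) \<in> \<Sigma>"
  then have "shift F 0 \<subseteq> clo_step \<Sigma> (clo_n \<Sigma> E 0)"
    by (rule clo_step_rule) simp
  then show ?thesis
    using clo_n_subset_clo_omega[of \<Sigma> E 1] by simp
qed

lemma derivable_sound:
  assumes "is_theory \<Sigma>" "derivable \<Sigma> \<phi>"
  shows "snd \<phi> \<subseteq> clo_omega \<Sigma> (fst \<phi>)"
  using assms(2)
proof (induction rule: derivable.induct)
  case (member \<phi>)
  then show ?case
    using member_subset_clo_omega[of "fst \<phi>" "snd \<phi>"] by simp
next
  case (ax \<phi>)
  then obtain A B where "\<phi> = (A \<union> B, A)"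
    unfolding ax_inst_def by blast
  then show ?case
    using subset_clo_omega[of "A \<union> B" \<Sigma>] by auto
next
  case (cut h1 h2 \<phi>)
  then obtain A B C D where eq: "h1 = (A, B)" "h2 = (B \<union> C, D)" "\<phi> = (A \<union> C, D)"
    unfolding cut_inst_def by blast
  have "B \<union> C \<subseteq> clo_omega \<Sigma> (A \<union> C)"
    using cut.IH(1) clo_omega_mono[of A "A \<union> C" \<Sigma>] subset_clo_omega[of "A \<union> C" \<Sigma>]
    unfolding eq by auto
  then have "clo_omega \<Sigma> (B \<union> C) \<subseteq> clo_omega \<Sigma> (A \<union> C)"
    by (rule clo_omega_subset[OF assms(1)])
  then show ?case
    using cut.IH(2) unfolding eq by simp
next
  case (shf h \<phi>)
  then obtain A B i where eq: "h = (A, B)" "\<phi> = (shift A i, shift B i)"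
    unfolding shf_inst_def by blast
  have "shift B i \<subseteq> shift (clo_omega \<Sigma> A) i"
    using shf.IH unfolding eq by (simp add: shift_mono)
  then show ?case
    using shift_clo_omega[of \<Sigma> A i] unfolding eq by simp
qed

lemma derivable_subset:
  assumes "finite A" "B \<subseteq> A"
  shows "derivable \<Sigma> (A, B)"
proof -
  have "ax_inst (A, B)"
    unfolding ax_inst_def using assms finite_subset[OF assms(2,1)]
    by (intro exI[of _ B] exI[of _ A]) auto
  then show ?thesis
    by (rule derivable.ax)
qed

lemma derivable_cut:
  assumes "derivable \<Sigma> (A, B)" "derivable \<Sigma> (B \<union> C, D)"
    and "finite A" "finite B" "finite C" "finite D"
  shows "derivable \<Sigma> (A \<union> C, D)"
proof -
  have "cut_inst (A, B) (B \<union> C, D) (A \<union> C, D)"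
    unfolding cut_inst_def using assms(3-6) by blast
  then show ?thesis
    by (rule derivable.cut[OF assms(1,2)])
qed

lemma derivable_shift:
  assumes "derivable \<Sigma> (A, B)" "finite A" "finite B"
  shows "derivable \<Sigma> (shift A i, shift B i)"
proof -
  have "shf_inst (A, B) (shift A i, shift B i)"
    unfolding shf_inst_def using assms(2,3) by blast
  then show ?thesis
    by (rule derivable.shf[OF assms(1)])
qed

lemma derivable_trans:
  assumes "derivable \<Sigma> (A, B)" "derivable \<Sigma> (B, D)" "finite A" "finite B" "finite D"
  shows "derivable \<Sigma> (A, D)"
  using derivable_cut[of \<Sigma> A B "{}" D] assms by simp

lemma derivable_Un:
  assumes "derivable \<Sigma> (A, B1)" "derivable \<Sigma> (A, B2)" "finite A" "finite B1" "finite B2"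
  shows "derivable \<Sigma> (A, B1 \<union> B2)"
proof -
  have "derivable \<Sigma> (B2 \<union> B1, B1 \<union> B2)"
    using assms(4,5) by (simp add: derivable_subset)
  then have "derivable \<Sigma> (A \<union> B1, B1 \<union> B2)"
    using derivable_cut[OF assms(2)] assms(3-5) by blast
  then have "derivable \<Sigma> (B1 \<union> A, B1 \<union> B2)"
    by (simp only: Un_commute)
  then have "derivable \<Sigma> (A \<union> A, B1 \<union> B2)"
    using derivable_cut[OF assms(1)] assms(3-5) by blast
  then show ?thesis
    by simp
qed

lemma derivable_if_derivable_singletons:
  assumes "finite A" "finite B" "\<And>b. b \<in> B \<Longrightarrow> derivable \<Sigma> (A, {b})"
  shows "derivable \<Sigma> (A, B)"
  using assms(2,3)
proof (induction B rule: finite_induct)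
  case empty
  then show ?case
    using assms(1) by (simp add: derivable_subset)
next
  case (insert b B)
  then show ?case
    using derivable_Un[of \<Sigma> A "{b}" B] assms(1) by simp
qed

lemma derivable_clo_n:
  assumes "is_theory \<Sigma>" "finite A" "b \<in> clo_n \<Sigma> A n"
  shows "derivable \<Sigma> (A, {b})"
  using assms(3)
proof (induction n arbitrary: b)
  case 0
  then show ?case
    using assms(2) by (simp add: derivable_subset)
next
  case (Suc n)
  from Suc.prems have "b \<in> clo_step \<Sigma> (clo_n \<Sigma> A n)"
    by simp
  then show ?case
  proof (cases rule: clo_stepE)
    case 1
    then show ?thesis
      by (rule Suc.IH)
  next
    case (2 E F i)
    then have fin: "finite E" "finite F"
      using is_theoryD[OF assms(1)] by auto
    have "derivable \<Sigma> (A, shift E i)"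
    proof (rule derivable_if_derivable_singletons)
      show "derivable \<Sigma> (A, {e})" if "e \<in> shift E i" for e
        using that 2(2) by (intro Suc.IH) blast
    qed (simp_all add: assms(2) fin)
    moreover have "derivable \<Sigma> (shift E i, shift F i)"
      using derivable_shift[OF derivable.member[OF 2(1)] fin] .
    ultimately have "derivable \<Sigma> (A, shift F i)"
      by (rule derivable_trans) (simp_all add: assms(2) fin)
    moreover have "derivable \<Sigma> (shift F i, {b})"
      using 2(3) fin by (simp add: derivable_subset)
    ultimately show ?thesis
      by (rule derivable_trans) (simp_all add: assms(2) fin)
  qed
qed

theorem lemma4:
  fixes \<Sigma> :: "('y::finite) fml set" and A B :: "'y tattr set"
  assumes "is_theory \<Sigma>" and "finite A" and "finite B"
  shows "B \<subseteq> clo_omega \<Sigma> A \<longleftrightarrow> provable \<Sigma> (A, B)"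
proof
  assume "B \<subseteq> clo_omega \<Sigma> A"
  then have "derivable \<Sigma> (A, {b})" if "b \<in> B" for b
    using that derivable_clo_n[OF assms(1,2)] unfolding clo_omega_def by blast
  then show "provable \<Sigma> (A, B)"
    using assms(2,3) derivable_if_derivable_singletons provable_iff_derivable by metis
next
  assume "provable \<Sigma> (A, B)"
  then show "B \<subseteq> clo_omega \<Sigma> A"
    using derivable_sound[OF assms(1)] provable_iff_derivable by fastforce
qed

end
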